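(* Let $A>1$. If a subset $B\subset(\mathbf R_{\ge0})^2$ contains no $(A+1)$-subgeometric sequence (i.e. there is no $(A+1)$-subgeometric sequence all of whose terms lie in $B$), then $B$ is $A$-small.
   Context: $(\mathbf R_{\ge0})^2$ carries the norm $\|(x,y)\|=x+y$ and associated $\ell^1$ distance; $\mathrm{diam}$ denotes diameter for this distance. For $U\subset(\mathbf R_{\ge0})^2$, $m_U=\inf\{\|(x,y)\|:(x,y)\in U\}$. A sequence $(U_n)$ of subsets is disjointly unbounded if $U_{n+1}\cap\bigcup_{i\le n}U_i=\emptyset$ for all $n$ and $m_{U_n}\to\infty$; it is $A$-bounded if $\mathrm{diam}(U_n\cup U_{n-1})\le A\cdot m_{U_{n-1}}$ for all $n$. $B$ is $A$-small if for every disjointly unbounded $A$-bounded sequence $(U_n)$ there exists $n_0$ with $U_{n_0}\cap B=\emptyset$. For a real $A'>0$, a sequence $((x_n,y_n))_{n\in\mathbf N}$ in $(\mathbf R_{\ge0})^2$ is $A'$-subgeometric if $\|(x_n,y_n)\|\to\infty$ and there is $n_0$ such that $\|(x_n,y_n)\|\le A'\|(x_{n-1},y_{n-1})\|$ for all $n\ge n_0$. *)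

theory Defs
  imports "HOL-Analysis.Analysis" "HOL-Library.Extended_Real"
begin

definition quadrant :: "(real \<times> real) set" where
  "quadrant = {p. 0 \<le> fst p \<and> 0 \<le> snd p}"

definition qnorm :: "real \<times> real \<Rightarrow> real" where
  "qnorm p = fst p + snd p"

definition l1dist :: "real \<times> real \<Rightarrow> real \<times> real \<Rightarrow> real" where
  "l1dist p q = \<bar>fst p - fst q\<bar> + \<bar>snd p - snd q\<bar>"

definition l1diam :: "(real \<times> real) set \<Rightarrow> ereal" where
  "l1diam U = (SUP p\<in>U. SUP q\<in>U. ereal (l1dist p q))"

text \<open>m_U = inf of norms over U (extended reals; +infinity for empty U).\<close>
definition mU :: "(real \<times> real) set \<Rightarrow> ereal" where
  "mU U = (INF p\<in>U. ereal (qnorm p))"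

definition disjointly_unbounded :: "(nat \<Rightarrow> (real \<times> real) set) \<Rightarrow> bool" where
  "disjointly_unbounded U \<longleftrightarrow>
     (\<forall>n. U (Suc n) \<inter> (\<Union>i\<le>n. U i) = {}) \<and> (\<lambda>n. mU (U n)) \<longlonglongrightarrow> \<infinity>"

definition A_bounded :: "real \<Rightarrow> (nat \<Rightarrow> (real \<times> real) set) \<Rightarrow> bool" where
  "A_bounded A U \<longleftrightarrow> (\<forall>n\<ge>1. l1diam (U n \<union> U (n - 1)) \<le> ereal A * mU (U (n - 1)))"

definition A_small :: "real \<Rightarrow> (real \<times> real) set \<Rightarrow> bool" where
  "A_small A B \<longleftrightarrow>
     (\<forall>U. (\<forall>n. U n \<subseteq> quadrant) \<and> disjointly_unbounded U \<and> A_bounded A U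
          \<longrightarrow> (\<exists>n0. U n0 \<inter> B = {}))"

definition subgeometric :: "real \<Rightarrow> (nat \<Rightarrow> real \<times> real) \<Rightarrow> bool" where
  "subgeometric A' p \<longleftrightarrow>
     (\<forall>n. p n \<in> quadrant) \<and>
     filterlim (\<lambda>n. qnorm (p n)) at_top sequentially \<and>
     (\<exists>n0. \<forall>n\<ge>n0. n \<ge> 1 \<longrightarrow> qnorm (p n) \<le> A' * qnorm (p (n - 1)))"

end

theory Submission
  imports Defs
begin

text \<open>Choosing a point of B in every member of an A-bounded sequence whose infima of norms
  tend to infinity yields an (A+1)-subgeometric sequence: consecutive points lie in a set of
  diameter at most A times the infimum of the norms on U (n-1), which is at most the norm of
  the earlier point, so the triangle inequality gives the factor A+1.\<close>

lemma mU_le_qnorm: "p \<in> U \<Longrightarrow> mU U \<le> ereal (qnorm p)"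
  unfolding mU_def by (rule INF_lower)

lemma l1dist_le_l1diam: "p \<in> U \<Longrightarrow> q \<in> U \<Longrightarrow> ereal (l1dist p q) \<le> l1diam U"
  unfolding l1diam_def by (meson SUP_upper2 order_refl)

lemma qnorm_le_qnorm_add_l1dist: "qnorm p \<le> qnorm q + l1dist p q"
  by (simp add: qnorm_def l1dist_def)

lemma filterlim_qnorm_at_top_if_mU_tendsto_PInfty:
  assumes "(\<lambda>n. mU (U n)) \<longlonglongrightarrow> \<infinity>" and "\<And>n. p n \<in> U n"
  shows "filterlim (\<lambda>n. qnorm (p n)) at_top sequentially"
  unfolding filterlim_at_top
proof
  fix Z :: real
  have "eventually (\<lambda>n. ereal Z < mU (U n)) sequentially"
    using assms(1) by (simp add: tendsto_PInfty)
  then show "eventually (\<lambda>n. Z \<le> qnorm (p n)) sequentially"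
  proof (rule eventually_mono)
    fix n assume "ereal Z < mU (U n)"
    also have "\<dots> \<le> ereal (qnorm (p n))" using mU_le_qnorm assms(2) .
    finally show "Z \<le> qnorm (p n)" by simp
  qed
qed

lemma qnorm_le_of_A_bounded:
  assumes "A_bounded A U" and "A \<ge> 0" and "\<And>n. p n \<in> U n" and "n \<ge> 1"
  shows "qnorm (p n) \<le> (A + 1) * qnorm (p (n - 1))"
proof -
  have "ereal (l1dist (p n) (p (n - 1))) \<le> l1diam (U n \<union> U (n - 1))"
    using assms(3) by (intro l1dist_le_l1diam) auto
  also have "\<dots> \<le> ereal A * mU (U (n - 1))"
    using assms(1,4) by (simp add: A_bounded_def)
  also have "\<dots> \<le> ereal A * ereal (qnorm (p (n - 1)))"
    using mU_le_qnorm[OF assms(3)] assms(2) by (intro ereal_mult_left_mono) auto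
  finally have "l1dist (p n) (p (n - 1)) \<le> A * qnorm (p (n - 1))" by simp
  with qnorm_le_qnorm_add_l1dist[of "p n" "p (n - 1)"] show ?thesis
    by (simp add: algebra_simps)
qed

lemma subgeometric_of_A_bounded:
  assumes "A_bounded A U" and "A \<ge> 0" and "(\<lambda>n. mU (U n)) \<longlonglongrightarrow> \<infinity>"
    and "\<And>n. p n \<in> U n" and "\<And>n. p n \<in> quadrant"
  shows "subgeometric (A + 1) p"
  unfolding subgeometric_def
  using assms(5) filterlim_qnorm_at_top_if_mU_tendsto_PInfty[OF assms(3,4)]
    qnorm_le_of_A_bounded[OF assms(1,2,4)] by blast

theorem lemmaA:
  fixes A :: real and B :: "(real \<times> real) set"
  assumes "A > 1"
    and "B \<subseteq> quadrant"
    and "\<not> (\<exists>p. subgeometric (A + 1) p \<and> (\<forall>n. p n \<in> B))"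
  shows "A_small A B"
  unfolding A_small_def
proof (intro allI impI, rule ccontr)
  fix U :: "nat \<Rightarrow> (real \<times> real) set"
  assume U: "(\<forall>n. U n \<subseteq> quadrant) \<and> disjointly_unbounded U \<and> A_bounded A U"
    and "\<not> (\<exists>n0. U n0 \<inter> B = {})"
  then have "\<forall>n. \<exists>q. q \<in> U n \<inter> B" by blast
  then obtain p where p: "\<And>n. p n \<in> U n \<inter> B" by metis
  have "subgeometric (A + 1) p"
  proof (rule subgeometric_of_A_bounded)
    show "A_bounded A U" using U by blast
    show "A \<ge> 0" using assms(1) by simp
    show "(\<lambda>n. mU (U n)) \<longlonglongrightarrow> \<infinity>" using U by (simp add: disjointly_unbounded_def)
    show "p n \<in> U n" for n using p by blast
    show "p n \<in> quadrant" for n using p assms(2) by blast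
  qed
  with p assms(3) show False by blast
qed

end
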